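(* Let $S^0$ be an adequate transversal of a quasi-adequate semigroup $S$. Then $I$ is a left regular subband and $\Lambda$ a right regular subband of $S$, and $E^0$ is a semilattice transversal of both $I$ and $\Lambda$, with $x^0\in V(x)\cap E^0$ for all $x\in I\cup\Lambda$. Moreover, if $x\in E^0$ then $x^0=x$.
   Context: For a semigroup $S$, $S^1$ is $S$ with an identity adjoined, $E(S)$ its idempotents, $V(x)$ the set of inverses of $x$, $\mathcal{L},\mathcal{R}$ Green's relations. $\mathcal{R}^\ast=\{(a,b):\forall x,y\in S^1,\ xa=ya\iff xb=yb\}$, $\mathcal{L}^\ast=\{(a,b):\forall x,y\in S^1,\ ax=ay\iff bx=by\}$. $S$ is abundant if each $\mathcal{R}^\ast$- and $\mathcal{L}^\ast$-class contains an idempotent; adequate if also idempotents commute (then $a^+$, $a^\ast$ are the unique idempotents $\mathcal{R}^\ast$-, resp. $\mathcal{L}^\ast$-related to $a$). Quasi-adequate: abundant with $E(S)$ a subsemigroup. An abundant subsemigroup $U$ of abundant $S$ is a $\ast$-subsemigroup if $\mathcal{L}^\ast(U)=\mathcal{L}^\ast(S)\cap(U\times U)$, $\mathcal{R}^\ast(U)=\mathcal{R}^\ast(S)\cap(U\times U)$. An adequate $\ast$-subsemigroup $S^0$ of abundant $S$ is an adequate transversal if each $x\in S$ has a unique $\overline{x}\in S^0$ and idempotents $e,f$ of $S$ (then unique, written $e_x,f_x$) with $x=e\overline{x}f$, $e\,\mathcal{L}\,\overline{x}^+$, $f\,\mathcal{R}\,\overline{x}^\ast$. $E^0=E(S^0)$,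 $I=\{e_x:x\in S\}$, $\Lambda=\{f_x:x\in S\}$. For regular $x\in S$, $x^0$ is the unique inverse of $x$ with $xx^0=e_x$ and $x^0x=f_x$. A left (right) regular band satisfies $xyx=xy$ ($xyx=yx$). $E^0$ is a semilattice transversal of a band $B$ if $E^0$ is a subsemilattice of $B$ and $|V(x)\cap E^0|=1$ for all $x\in B$. *)

theory Defs
  imports Main
begin

text \<open>Semigroups are subsets S of a type of class semigroup_mult closed under
  multiplication. Elements of S^1 are encoded as options: None is the adjoined identity.\<close>

definition closed :: "'a::semigroup_mult set \<Rightarrow> bool" where
  "closed A \<longleftrightarrow> (\<forall>a\<in>A. \<forall>b\<in>A. a * b \<in> A)"

definition one_adj :: "'a set \<Rightarrow> 'a option set" where
  "one_adj A = insert None (Some ` A)"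

fun lmul :: "'a::semigroup_mult option \<Rightarrow> 'a \<Rightarrow> 'a" where
  "lmul None a = a"
| "lmul (Some x) a = x * a"

fun rmul :: "'a::semigroup_mult \<Rightarrow> 'a option \<Rightarrow> 'a" where
  "rmul a None = a"
| "rmul a (Some x) = a * x"

definition idems :: "'a::semigroup_mult set \<Rightarrow> 'a set" where
  "idems A = {e\<in>A. e * e = e}"

definition greenL :: "'a::semigroup_mult set \<Rightarrow> 'a \<Rightarrow> 'a \<Rightarrow> bool" where
  "greenL A a b \<longleftrightarrow> a \<in> A \<and> b \<in> A \<and>
     (\<exists>u\<in>one_adj A. lmul u a = b) \<and> (\<exists>v\<in>one_adj A. lmul v b = a)"

definition greenR :: "'a::semigroup_mult set \<Rightarrow> 'a \<Rightarrow> 'a \<Rightarrow> bool" where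
  "greenR A a b \<longleftrightarrow> a \<in> A \<and> b \<in> A \<and>
     (\<exists>u\<in>one_adj A. rmul a u = b) \<and> (\<exists>v\<in>one_adj A. rmul b v = a)"

definition Rstar :: "'a::semigroup_mult set \<Rightarrow> 'a \<Rightarrow> 'a \<Rightarrow> bool" where
  "Rstar A a b \<longleftrightarrow> a \<in> A \<and> b \<in> A \<and>
     (\<forall>x\<in>one_adj A. \<forall>y\<in>one_adj A. lmul x a = lmul y a \<longleftrightarrow> lmul x b = lmul y b)"

definition Lstar :: "'a::semigroup_mult set \<Rightarrow> 'a \<Rightarrow> 'a \<Rightarrow> bool" where
  "Lstar A a b \<longleftrightarrow> a \<in> A \<and> b \<in> A \<and>
     (\<forall>x\<in>one_adj A. \<forall>y\<in>one_adj A. rmul a x = rmul a y \<longleftrightarrow> rmul b x = rmul b y)"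

definition abundant :: "'a::semigroup_mult set \<Rightarrow> bool" where
  "abundant A \<longleftrightarrow> closed A \<and>
     (\<forall>a\<in>A. (\<exists>e\<in>idems A. Rstar A a e) \<and> (\<exists>f\<in>idems A. Lstar A a f))"

definition adequate :: "'a::semigroup_mult set \<Rightarrow> bool" where
  "adequate A \<longleftrightarrow> abundant A \<and> (\<forall>e\<in>idems A. \<forall>f\<in>idems A. e * f = f * e)"

definition quasi_adequate :: "'a::semigroup_mult set \<Rightarrow> bool" where
  "quasi_adequate A \<longleftrightarrow> abundant A \<and> closed (idems A)"

definition star_subsemigroup :: "'a::semigroup_mult set \<Rightarrow> 'a set \<Rightarrow> bool" where
  "star_subsemigroup U A \<longleftrightarrow> U \<subseteq> A \<and> abundant U \<and>
     (\<forall>a\<in>U. \<forall>b\<in>U. Lstar U a b \<longleftrightarrow> Lstar A a b) \<and>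
     (\<forall>a\<in>U. \<forall>b\<in>U. Rstar U a b \<longleftrightarrow> Rstar A a b)"

definition plus :: "'a::semigroup_mult set \<Rightarrow> 'a \<Rightarrow> 'a" where
  "plus A a = (THE e. e \<in> idems A \<and> Rstar A a e)"

definition star :: "'a::semigroup_mult set \<Rightarrow> 'a \<Rightarrow> 'a" where
  "star A a = (THE f. f \<in> idems A \<and> Lstar A a f)"

definition fact :: "'a::semigroup_mult set \<Rightarrow> 'a set \<Rightarrow> 'a \<Rightarrow> 'a \<times> 'a \<times> 'a \<Rightarrow> bool" where
  "fact S0 S x t \<longleftrightarrow> (case t of (xb, e, f) \<Rightarrow>
     xb \<in> S0 \<and> e \<in> idems S \<and> f \<in> idems S \<and> x = e * xb * f \<and>
     greenL S e (plus S0 xb) \<and> greenR S f (star S0 xb))"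

definition adequate_transversal :: "'a::semigroup_mult set \<Rightarrow> 'a set \<Rightarrow> bool" where
  "adequate_transversal S0 S \<longleftrightarrow> adequate S0 \<and> star_subsemigroup S0 S \<and>
     (\<forall>x\<in>S. \<exists>!t. fact S0 S x t)"

definition bar :: "'a::semigroup_mult set \<Rightarrow> 'a set \<Rightarrow> 'a \<Rightarrow> 'a" where
  "bar S0 S x = fst (THE t. fact S0 S x t)"

definition ex :: "'a::semigroup_mult set \<Rightarrow> 'a set \<Rightarrow> 'a \<Rightarrow> 'a" where
  "ex S0 S x = fst (snd (THE t. fact S0 S x t))"

definition fx :: "'a::semigroup_mult set \<Rightarrow> 'a set \<Rightarrow> 'a \<Rightarrow> 'a" where
  "fx S0 S x = snd (snd (THE t. fact S0 S x t))"

definition Iset :: "'a::semigroup_mult set \<Rightarrow> 'a set \<Rightarrow> 'a set" where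
  "Iset S0 S = ex S0 S ` S"

definition Lambda :: "'a::semigroup_mult set \<Rightarrow> 'a set \<Rightarrow> 'a set" where
  "Lambda S0 S = fx S0 S ` S"

definition inverses :: "'a::semigroup_mult set \<Rightarrow> 'a \<Rightarrow> 'a set" where
  "inverses S x = {y\<in>S. x * y * x = x \<and> y * x * y = y}"

definition zero_inv :: "'a::semigroup_mult set \<Rightarrow> 'a set \<Rightarrow> 'a \<Rightarrow> 'a" where
  "zero_inv S0 S x = (THE y. y \<in> inverses S x \<and> x * y = ex S0 S x \<and> y * x = fx S0 S x)"

definition band :: "'a::semigroup_mult set \<Rightarrow> 'a set \<Rightarrow> bool" where
  "band S B \<longleftrightarrow> B \<subseteq> S \<and> closed B \<and> (\<forall>x\<in>B. x * x = x)"

definition left_regular_band :: "'a::semigroup_mult set \<Rightarrow> 'a set \<Rightarrow> bool" where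
  "left_regular_band S B \<longleftrightarrow> band S B \<and> (\<forall>x\<in>B. \<forall>y\<in>B. x * y * x = x * y)"

definition right_regular_band :: "'a::semigroup_mult set \<Rightarrow> 'a set \<Rightarrow> bool" where
  "right_regular_band S B \<longleftrightarrow> band S B \<and> (\<forall>x\<in>B. \<forall>y\<in>B. x * y * x = y * x)"

definition semilattice_transversal :: "'a::semigroup_mult set \<Rightarrow> 'a set \<Rightarrow> 'a set \<Rightarrow> bool" where
  "semilattice_transversal S E0 B \<longleftrightarrow> E0 \<subseteq> B \<and> closed E0 \<and>
     (\<forall>e\<in>E0. e * e = e) \<and> (\<forall>e\<in>E0. \<forall>f\<in>E0. e * f = f * e) \<and>
     (\<forall>x\<in>B. card (inverses S x \<inter> E0) = 1)"

end

theory Submission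
  imports Defs
begin

text \<open>An idempotent g of S factors as g = e_g (bar g) f_g with bar g in E0, and then
  e_g = g (bar g) and f_g = (bar g) g. Consequently I consists of the idempotents that are
  L-related to an element of E0, and dually \<Lambda> with R. The only factorisation of an element c of
  E0 is c c c; applied to c = e0 f0 this shows that e0 f is L-related to e0 f0 whenever f is
  L-related to f0. Hence I is closed under multiplication with e f L e0 f0, and e f = e f e
  because both are L-related to e0 f0. Finally, if x is L-related to e0, then e0 is the only
  inverse of x in the semilattice E0, and x e0 = x = e_x, e0 x = e0 = f_x, so x^0 = e0.\<close>

lemma Some_in_one_adj [simp]: "Some x \<in> one_adj A \<longleftrightarrow> x \<in> A"
  and None_in_one_adj [simp]: "None \<in> one_adj A"
  by (auto simp: one_adj_def)

lemma Rstar_lmul_iff: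
  "Rstar A a b \<Longrightarrow> x \<in> one_adj A \<Longrightarrow> y \<in> one_adj A \<Longrightarrow> lmul x a = lmul y a \<longleftrightarrow> lmul x b = lmul y b"
  by (simp add: Rstar_def)

lemma Lstar_rmul_iff:
  "Lstar A a b \<Longrightarrow> x \<in> one_adj A \<Longrightarrow> y \<in> one_adj A \<Longrightarrow> rmul a x = rmul a y \<longleftrightarrow> rmul b x = rmul b y"
  by (simp add: Lstar_def)

lemma Rstar_cancel_left:
  "Rstar A a e \<Longrightarrow> u \<in> A \<Longrightarrow> v \<in> A \<Longrightarrow> u * a = v * a \<Longrightarrow> u * e = v * e"
  using Rstar_lmul_iff[of A a e "Some u" "Some v"] by simp

lemma Rstar_left_unit: "Rstar A a e \<Longrightarrow> u \<in> A \<Longrightarrow> u * a = a \<Longrightarrow> u * e = e"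
  using Rstar_lmul_iff[of A a e "Some u" None] by simp

lemma Rstar_idems_left_unit: "Rstar A a e \<Longrightarrow> e \<in> idems A \<Longrightarrow> e * a = a"
  using Rstar_lmul_iff[of A a e "Some e" None] by (simp add: idems_def)

lemma Lstar_cancel_right:
  "Lstar A a f \<Longrightarrow> u \<in> A \<Longrightarrow> v \<in> A \<Longrightarrow> a * u = a * v \<Longrightarrow> f * u = f * v"
  using Lstar_rmul_iff[of A a f "Some u" "Some v"] by simp

lemma Lstar_right_unit: "Lstar A a f \<Longrightarrow> u \<in> A \<Longrightarrow> a * u = a \<Longrightarrow> f * u = f"
  using Lstar_rmul_iff[of A a f "Some u" None] by simp

lemma Lstar_idems_right_unit: "Lstar A a f \<Longrightarrow> f \<in> idems A \<Longrightarrow> a * f = a"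
  using Lstar_rmul_iff[of A a f "Some f" None] by (simp add: idems_def)

lemma lmul_idem_right: "e * e = e \<Longrightarrow> lmul u e * e = lmul u e"
  by (cases u) (simp_all add: mult.assoc)

lemma rmul_idem_left: "f * f = f \<Longrightarrow> f * rmul f u = rmul f u"
  by (cases u) (simp_all add: mult.assoc[symmetric])

lemma greenL_idems_iff:
  assumes e: "e \<in> idems A" and p: "p \<in> idems A"
  shows "greenL A e p \<longleftrightarrow> e * p = e \<and> p * e = p"
proof
  assume "greenL A e p"
  then obtain u v where "lmul u e = p" "lmul v p = e"
    unfolding greenL_def by blast
  with e p show "e * p = e \<and> p * e = p"
    using lmul_idem_right[of e u] lmul_idem_right[of p v] by (simp add: idems_def)
next
  assume "e * p = e \<and> p * e = p"
  moreover have "e \<in> A" and "p \<in> A" using e p by (simp_all add: idems_def)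
  ultimately have "lmul (Some p) e = p" and "lmul (Some e) p = e"
    and "Some p \<in> one_adj A" and "Some e \<in> one_adj A" by simp_all
  with \<open>e \<in> A\<close> \<open>p \<in> A\<close> show "greenL A e p" unfolding greenL_def by blast
qed

lemma greenR_idems_iff:
  assumes f: "f \<in> idems A" and q: "q \<in> idems A"
  shows "greenR A f q \<longleftrightarrow> f * q = q \<and> q * f = f"
proof
  assume "greenR A f q"
  then obtain u v where "rmul f u = q" "rmul q v = f"
    unfolding greenR_def by blast
  with f q show "f * q = q \<and> q * f = f"
    using rmul_idem_left[of f u] rmul_idem_left[of q v] by (simp add: idems_def)
next
  assume "f * q = q \<and> q * f = f"
  moreover have "f \<in> A" and "q \<in> A" using f q by (simp_all add: idems_def)
  ultimately have "rmul f (Some q) = q" and "rmul q (Some f) = f"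
    and "Some q \<in> one_adj A" and "Some f \<in> one_adj A" by simp_all
  with \<open>f \<in> A\<close> \<open>q \<in> A\<close> show "greenR A f q" unfolding greenR_def by blast
qed

lemma adequate_idems_comm: "adequate A \<Longrightarrow> e \<in> idems A \<Longrightarrow> f \<in> idems A \<Longrightarrow> e * f = f * e"
  unfolding adequate_def by blast

lemma adequate_idems_closed:
  assumes A: "adequate A" and e: "e \<in> idems A" and f: "f \<in> idems A"
  shows "e * f \<in> idems A"
proof -
  have "e * f \<in> A"
    using assms unfolding adequate_def abundant_def closed_def idems_def by blast
  moreover have "e * f * (e * f) = e * f"
  proof -
    have "e * f * (e * f) = e * (f * e) * f" by (simp add: mult.assoc)
    also have "\<dots> = e * (e * f) * f"
      using adequate_idems_comm[OF assms] by simp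
    also have "\<dots> = (e * e) * (f * f)" by (simp add: mult.assoc)
    also have "\<dots> = e * f" using e f by (simp add: idems_def)
    finally show ?thesis .
  qed
  ultimately show ?thesis unfolding idems_def by simp
qed

lemma adequate_plus_eq:
  assumes A: "adequate A" and e: "e \<in> idems A" and R: "Rstar A a e"
  shows "plus A a = e"
  unfolding plus_def
proof (rule the_equality)
  fix e' assume "e' \<in> idems A \<and> Rstar A a e'"
  then have e': "e' \<in> idems A" and R': "Rstar A a e'" by auto
  have "e' * e = e"
    using Rstar_left_unit[OF R _ Rstar_idems_left_unit[OF R' e']] e' by (simp add: idems_def)
  moreover have "e * e' = e'"
    using Rstar_left_unit[OF R' _ Rstar_idems_left_unit[OF R e]] e by (simp add: idems_def)
  ultimately show "e' = e" using adequate_idems_comm[OF A e e'] by simp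
qed (use e R in blast)

lemma adequate_star_eq:
  assumes A: "adequate A" and f: "f \<in> idems A" and L: "Lstar A a f"
  shows "star A a = f"
  unfolding star_def
proof (rule the_equality)
  fix f' assume "f' \<in> idems A \<and> Lstar A a f'"
  then have f': "f' \<in> idems A" and L': "Lstar A a f'" by auto
  have "f * f' = f"
    using Lstar_right_unit[OF L _ Lstar_idems_right_unit[OF L' f']] f' by (simp add: idems_def)
  moreover have "f' * f = f'"
    using Lstar_right_unit[OF L' _ Lstar_idems_right_unit[OF L f]] f by (simp add: idems_def)
  ultimately show "f' = f" using adequate_idems_comm[OF A f f'] by simp
qed (use f L in blast)

lemma adequate_plus:
  assumes "adequate A" and "a \<in> A"
  shows "plus A a \<in> idems A \<and> Rstar A a (plus A a)"
proof -
  obtain e where "e \<in> idems A" and "Rstar A a e"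
    using assms unfolding adequate_def abundant_def by blast
  then show ?thesis using adequate_plus_eq[OF assms(1)] by simp
qed

lemma adequate_star:
  assumes "adequate A" and "a \<in> A"
  shows "star A a \<in> idems A \<and> Lstar A a (star A a)"
proof -
  obtain f where "f \<in> idems A" and "Lstar A a f"
    using assms unfolding adequate_def abundant_def by blast
  then show ?thesis using adequate_star_eq[OF assms(1)] by simp
qed

lemma adequate_plus_idems: "adequate A \<Longrightarrow> e \<in> idems A \<Longrightarrow> plus A e = e"
  by (rule adequate_plus_eq) (auto simp: idems_def Rstar_def)

lemma adequate_star_idems: "adequate A \<Longrightarrow> e \<in> idems A \<Longrightarrow> star A e = e"
  by (rule adequate_star_eq) (auto simp: idems_def Lstar_def)

lemma inverses_unique_by_products:
  assumes "y \<in> inverses S x" and "z \<in> inverses S x" and "x * y = x * z" and "y * x = z * x"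
  shows "y = z"
proof -
  have "y = y * x * y" using assms(1) unfolding inverses_def by simp
  also have "\<dots> = z * (x * z)" using assms(3,4) by (simp add: mult.assoc)
  also have "\<dots> = z" using assms(2) unfolding inverses_def by (simp add: mult.assoc)
  finally show ?thesis .
qed

lemma zero_inv_eqI:
  assumes "y \<in> inverses S x" and "x * y = ex S0 S x" and "y * x = fx S0 S x"
  shows "zero_inv S0 S x = y"
  unfolding zero_inv_def
proof (rule the_equality)
  fix z assume "z \<in> inverses S x \<and> x * z = ex S0 S x \<and> z * x = fx S0 S x"
  with assms show "z = y" by (intro inverses_unique_by_products[of z S x y]) simp_all
qed (use assms in blast)

lemma inverses_inter_commuting_idems_left:
  assumes comm: "\<And>b c. b \<in> E \<Longrightarrow> c \<in> E \<Longrightarrow> b * c = c * b"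
    and idem: "\<And>b. b \<in> E \<Longrightarrow> b * b = b"
    and x: "x * x = x" and e0: "e0 \<in> E" "e0 \<in> S" and xe0: "x * e0 = x" and e0x: "e0 * x = e0"
  shows "inverses S x \<inter> E = {e0}"
proof -
  have "b = e0" if b: "b \<in> E" and xbx: "x * b * x = x" and bxb: "b * x * b = b" for b
  proof -
    have "b = b * (x * e0) * b" using bxb xe0 by simp
    also have "\<dots> = b * x * (b * e0)" using comm[OF b e0(1)] by (simp add: mult.assoc)
    also have "\<dots> = b * e0" using bxb by (simp add: mult.assoc[symmetric])
    finally have be0: "b = b * e0" .
    have "e0 = e0 * (x * b * x)" using xbx e0x by simp
    also have "\<dots> = (e0 * x) * b * x" by (simp add: mult.assoc)
    also have "\<dots> = (b * e0) * x" using e0x comm[OF b e0(1)] by (simp add: mult.assoc)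
    finally have "e0 = b * x" using be0 by simp
    then have "b * e0 = e0" using idem[OF b] by (simp add: mult.assoc[symmetric])
    with be0 show ?thesis by simp
  qed
  moreover have "e0 \<in> inverses S x"
    unfolding inverses_def using x e0 xe0 e0x idem[OF e0(1)] by simp
  ultimately show ?thesis using e0 unfolding inverses_def by blast
qed

lemma inverses_inter_commuting_idems_right:
  assumes comm: "\<And>b c. b \<in> E \<Longrightarrow> c \<in> E \<Longrightarrow> b * c = c * b"
    and idem: "\<And>b. b \<in> E \<Longrightarrow> b * b = b"
    and x: "x * x = x" and e0: "e0 \<in> E" "e0 \<in> S" and e0x: "e0 * x = x" and xe0: "x * e0 = e0"
  shows "inverses S x \<inter> E = {e0}"
proof -
  have "b = e0" if b: "b \<in> E" and xbx: "x * b * x = x" and bxb: "b * x * b = b" for b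
  proof -
    have "b = b * (e0 * x) * b" using bxb e0x by simp
    also have "\<dots> = (b * e0) * x * b" by (simp add: mult.assoc)
    also have "\<dots> = (e0 * b) * x * b" using comm[OF b e0(1)] by simp
    also have "\<dots> = e0 * b" using bxb by (simp add: mult.assoc)
    finally have e0b: "b = e0 * b" .
    have "e0 = (x * b * x) * e0" using xbx xe0 by simp
    also have "\<dots> = x * b * (x * e0)" by (simp add: mult.assoc)
    also have "\<dots> = x * (e0 * b)" using xe0 comm[OF b e0(1)] by (simp add: mult.assoc)
    finally have "e0 = x * b" using e0b by simp
    then have "e0 * b = e0" using idem[OF b] by (simp add: mult.assoc)
    with e0b show ?thesis by simp
  qed
  moreover have "e0 \<in> inverses S x"
    unfolding inverses_def using x e0 xe0 e0x idem[OF e0(1)] by simp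
  ultimately show ?thesis using e0 unfolding inverses_def by blast
qed

locale quasi_adequate_transversal =
  fixes S S0 :: "'a::semigroup_mult set"
  assumes closed_S: "closed S" and quasi_adequate_S: "quasi_adequate S"
    and transversal: "adequate_transversal S0 S"
begin

lemma adequate_S0: "adequate S0"
  using transversal unfolding adequate_transversal_def by blast

lemma S0_subset: "S0 \<subseteq> S"
  using transversal unfolding adequate_transversal_def star_subsemigroup_def by blast

lemma idems_S0_subset: "idems S0 \<subseteq> idems S"
  using S0_subset unfolding idems_def by blast

lemma idems_S_mult: "e \<in> idems S \<Longrightarrow> f \<in> idems S \<Longrightarrow> e * f \<in> idems S"
  using quasi_adequate_S unfolding quasi_adequate_def closed_def by blast

lemma idems_S0_comm: "e \<in> idems S0 \<Longrightarrow> f \<in> idems S0 \<Longrightarrow> e * f = f * e"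
  using adequate_idems_comm[OF adequate_S0] .

lemma idems_S0_mult: "e \<in> idems S0 \<Longrightarrow> f \<in> idems S0 \<Longrightarrow> e * f \<in> idems S0"
  using adequate_idems_closed[OF adequate_S0] .

lemma Rstar_S0_imp_Rstar_S: "a \<in> S0 \<Longrightarrow> b \<in> S0 \<Longrightarrow> Rstar S0 a b \<Longrightarrow> Rstar S a b"
  using transversal unfolding adequate_transversal_def star_subsemigroup_def by blast

lemma Lstar_S0_imp_Lstar_S: "a \<in> S0 \<Longrightarrow> b \<in> S0 \<Longrightarrow> Lstar S0 a b \<Longrightarrow> Lstar S a b"
  using transversal unfolding adequate_transversal_def star_subsemigroup_def by blast

lemma ex1_fact: "x \<in> S \<Longrightarrow> \<exists>!t. fact S0 S x t"
  using transversal unfolding adequate_transversal_def by blast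

lemma fact_bar_ex_fx: "x \<in> S \<Longrightarrow> fact S0 S x (bar S0 S x, ex S0 S x, fx S0 S x)"
  using theI'[OF ex1_fact] unfolding bar_def ex_def fx_def by simp

lemma bar_ex_fx_eqI:
  "x \<in> S \<Longrightarrow> fact S0 S x (a, e, f) \<Longrightarrow> bar S0 S x = a \<and> ex S0 S x = e \<and> fx S0 S x = f"
  using ex1_fact fact_bar_ex_fx by blast

lemma factD:
  assumes "fact S0 S x (a, e, f)"
  shows "a \<in> S0" and "e \<in> idems S" and "f \<in> idems S" and "x = e * a * f"
    and "e * plus S0 a = e" and "plus S0 a * e = plus S0 a"
    and "f * star S0 a = star S0 a" and "star S0 a * f = f"
proof -
  show a: "a \<in> S0" and e: "e \<in> idems S" and f: "f \<in> idems S" and "x = e * a * f"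
    using assms unfolding fact_def by simp_all
  have "plus S0 a \<in> idems S" and "star S0 a \<in> idems S"
    using adequate_plus[OF adequate_S0 a] adequate_star[OF adequate_S0 a] idems_S0_subset by blast+
  with assms e f show "e * plus S0 a = e" and "plus S0 a * e = plus S0 a"
    and "f * star S0 a = star S0 a" and "star S0 a * f = f"
    unfolding fact_def by (simp_all add: greenL_idems_iff greenR_idems_iff)
qed

lemma fact_idems_S0_iff:
  assumes a: "a \<in> idems S0"
  shows "fact S0 S x (a, e, f) \<longleftrightarrow> e \<in> idems S \<and> f \<in> idems S \<and> x = e * a * f \<and>
    e * a = e \<and> a * e = a \<and> f * a = a \<and> a * f = f"
proof -
  have "a \<in> S0" and "a \<in> idems S" using a idems_S0_subset by (auto simp: idems_def)
  then show ?thesis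
    using adequate_plus_idems[OF adequate_S0 a] adequate_star_idems[OF adequate_S0 a]
    by (auto simp: fact_def greenL_idems_iff greenR_idems_iff)
qed

lemma fact_idems_S0: "c \<in> idems S0 \<Longrightarrow> fact S0 S c t \<longleftrightarrow> t = (c, c, c)"
  using ex1_fact[of c] fact_idems_S0_iff[of c c c c] idems_S0_subset S0_subset
  by (auto simp: idems_def)

text \<open>With p = plus S0 a and q = star S0 a for a = bar g, idempotence of g gives
  a f e a = a; cancelling along R* and L* turns this into a f e = p and f e a = q, so a = p q
  is a product of idempotents of S0.\<close>

lemma bar_idems:
  assumes g: "g \<in> idems S"
  shows "bar S0 S g \<in> idems S0"
proof -
  define a e f where "a = bar S0 S g" and "e = ex S0 S g" and "f = fx S0 S g"
  define p q where "p = plus S0 a" and "q = star S0 a"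
  have gS: "g \<in> S" and gg: "g * g = g" using g by (simp_all add: idems_def)
  note F = factD[OF fact_bar_ex_fx[OF gS], folded a_def e_def f_def p_def q_def]
  have a: "a \<in> S0" and e: "e \<in> idems S" and f: "f \<in> idems S" and g_eq: "g = e * a * f"
    and ep: "e * p = e" and pe: "p * e = p" and fq: "f * q = q" and qf: "q * f = f"
    using F by simp_all
  have p: "p \<in> idems S0" and "Rstar S0 a p" and q: "q \<in> idems S0" and "Lstar S0 a q"
    using adequate_plus[OF adequate_S0 a] adequate_star[OF adequate_S0 a] p_def q_def by simp_all
  then have pR: "Rstar S a p" and qL: "Lstar S a q"
    using a Rstar_S0_imp_Rstar_S Lstar_S0_imp_Lstar_S by (auto simp: idems_def)
  have pS: "p \<in> idems S" and qS: "q \<in> idems S" using p q idems_S0_subset by blast+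
  have pa: "p * a = a" using Rstar_idems_left_unit[OF pR pS] .
  have aq: "a * q = a" using Lstar_idems_right_unit[OF qL qS] .
  have aS: "a \<in> S" and eS: "e \<in> S" and fS: "f \<in> S" using a e f S0_subset by (auto simp: idems_def)
  have fea_S: "f * e * a \<in> S" and afe_S: "a * f * e \<in> S"
    using closed_S aS eS fS unfolding closed_def by blast+
  have pg: "p * g = a * f" using g_eq pe pa by (simp add: mult.assoc[symmetric])
  have "a * f * g = a * f" using pg gg by (metis mult.assoc)
  then have "a * f * g * q = a * f * q" by simp
  then have "a * f * e * a * (f * q) = a * (f * q)" using g_eq by (simp add: mult.assoc)
  then have a_fea: "a * (f * e * a) = a" using fq aq by (simp add: mult.assoc)
  have fea: "f * e * a = q"
  proof -
    have eq: "a * (f * e * a) = a * q" using a_fea aq by simp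
    have "q * (f * e * a) = q * q"
      using Lstar_cancel_right[OF qL fea_S _ eq] qS by (simp add: idems_def)
    then show ?thesis using qf qS by (simp add: idems_def mult.assoc[symmetric])
  qed
  have afe: "a * f * e = p"
  proof -
    have eq: "(a * f * e) * a = p * a" using a_fea pa by (simp add: mult.assoc)
    have "(a * f * e) * p = p * p"
      using Rstar_cancel_left[OF pR afe_S _ eq] pS by (simp add: idems_def)
    then show ?thesis using ep pS by (simp add: idems_def mult.assoc)
  qed
  have "f * e * (f * e) = f * e" using idems_S_mult[OF f e] by (simp add: idems_def)
  then have "p * q = a * (f * e * a)" using afe fea by (metis mult.assoc)
  then have "a = p * q" using a_fea by simp
  then show ?thesis using idems_S0_mult[OF p q] a_def by simp
qed

lemma ex_fx_idems:
  assumes g: "g \<in> idems S"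
  shows "ex S0 S g = g * bar S0 S g" and "fx S0 S g = bar S0 S g * g"
proof -
  define a e f where "a = bar S0 S g" and "e = ex S0 S g" and "f = fx S0 S g"
  have a: "a \<in> idems S0" using bar_idems[OF g] a_def by simp
  have "fact S0 S g (a, e, f)"
    using fact_bar_ex_fx g unfolding a_def e_def f_def by (simp add: idems_def)
  then have "g = e * a * f" and "e * a = e" and "f * a = a" and "a * e = a" and "a * f = f"
    using fact_idems_S0_iff[OF a] by simp_all
  moreover have "a * a = a" using a by (simp add: idems_def)
  ultimately show "ex S0 S g = g * bar S0 S g" and "fx S0 S g = bar S0 S g * g"
    unfolding a_def[symmetric] e_def[symmetric] f_def[symmetric] by (metis mult.assoc)+
qed

lemma ex_fx_L_idems_S0:
  assumes x: "x \<in> idems S" and e0: "e0 \<in> idems S0" and "x * e0 = x" and "e0 * x = e0"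
  shows "ex S0 S x = x" and "fx S0 S x = e0"
proof -
  have "fact S0 S x (e0, x, e0)"
    using fact_idems_S0_iff[OF e0] assms idems_S0_subset by (auto simp: idems_def mult.assoc)
  then show "ex S0 S x = x" and "fx S0 S x = e0"
    using bar_ex_fx_eqI x by (simp_all add: idems_def)
qed

lemma ex_fx_R_idems_S0:
  assumes x: "x \<in> idems S" and e0: "e0 \<in> idems S0" and "e0 * x = x" and "x * e0 = e0"
  shows "ex S0 S x = e0" and "fx S0 S x = x"
proof -
  have "fact S0 S x (e0, e0, x)"
    using fact_idems_S0_iff[OF e0] assms idems_S0_subset by (auto simp: idems_def)
  then show "ex S0 S x = e0" and "fx S0 S x = x"
    using bar_ex_fx_eqI x by (simp_all add: idems_def)
qed

lemma Iset_iff: "x \<in> Iset S0 S \<longleftrightarrow> x \<in> idems S \<and> (\<exists>e0\<in>idems S0. x * e0 = x \<and> e0 * x = e0)"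
proof
  assume "x \<in> Iset S0 S"
  then obtain y where y: "y \<in> S" and x: "x = ex S0 S y" unfolding Iset_def by blast
  note F = factD[OF fact_bar_ex_fx[OF y], folded x]
  moreover have "plus S0 (bar S0 S y) \<in> idems S0" using adequate_plus[OF adequate_S0 F(1)] by blast
  ultimately show "x \<in> idems S \<and> (\<exists>e0\<in>idems S0. x * e0 = x \<and> e0 * x = e0)" by blast
next
  assume "x \<in> idems S \<and> (\<exists>e0\<in>idems S0. x * e0 = x \<and> e0 * x = e0)"
  then have "x \<in> S" and "ex S0 S x = x" using ex_fx_L_idems_S0 by (auto simp: idems_def)
  then show "x \<in> Iset S0 S" unfolding Iset_def by (metis image_eqI)
qed

lemma Lambda_iff: "x \<in> Lambda S0 S \<longleftrightarrow> x \<in> idems S \<and> (\<exists>e0\<in>idems S0. e0 * x = x \<and> x * e0 = e0)"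
proof
  assume "x \<in> Lambda S0 S"
  then obtain y where y: "y \<in> S" and x: "x = fx S0 S y" unfolding Lambda_def by blast
  note F = factD[OF fact_bar_ex_fx[OF y], folded x]
  moreover have "star S0 (bar S0 S y) \<in> idems S0" using adequate_star[OF adequate_S0 F(1)] by blast
  ultimately show "x \<in> idems S \<and> (\<exists>e0\<in>idems S0. e0 * x = x \<and> x * e0 = e0)" by blast
next
  assume "x \<in> idems S \<and> (\<exists>e0\<in>idems S0. e0 * x = x \<and> x * e0 = e0)"
  then have "x \<in> S" and "fx S0 S x = x" using ex_fx_R_idems_S0 by (auto simp: idems_def)
  then show "x \<in> Lambda S0 S" unfolding Lambda_def by (metis image_eqI)
qed

text \<open>Factorise the idempotent k = e0 f as e' a f' with a = bar k; then (c e') a f' is a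
  factorisation of c = e0 f0, so uniqueness of factorisations in E0 forces a = f' = c.\<close>

lemma idems_S0_mult_left_L:
  assumes e0: "e0 \<in> idems S0" and f: "f \<in> idems S" and f0: "f0 \<in> idems S0"
    and ff0: "f * f0 = f" and f0f: "f0 * f = f0"
  shows "e0 * f * (e0 * f0) = e0 * f \<and> e0 * f0 * (e0 * f) = e0 * f0"
proof -
  define k c a where "k = e0 * f" and "c = e0 * f0" and "a = bar S0 S k"
  define e' f' where "e' = ex S0 S k" and "f' = fx S0 S k"
  have e0S: "e0 \<in> idems S" using e0 idems_S0_subset by blast
  have k: "k \<in> idems S" unfolding k_def using idems_S_mult[OF e0S f] .
  have c: "c \<in> idems S0" unfolding c_def using idems_S0_mult[OF e0 f0] .
  have a: "a \<in> idems S0" unfolding a_def using bar_idems[OF k] .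
  have e'_eq: "e' = k * a" and f'_eq: "f' = a * k" unfolding e'_def f'_def a_def using ex_fx_idems[OF k] by simp_all
  have "fact S0 S k (a, e', f')"
    using fact_bar_ex_fx k unfolding a_def e'_def f'_def by (simp add: idems_def)
  then have e': "e' \<in> idems S" and f': "f' \<in> idems S" and k_eq: "k = e' * a * f'"
    and e'a: "e' * a = e'" and ae': "a * e' = a" and f'a: "f' * a = a" and af': "a * f' = f'"
    using fact_idems_S0_iff[OF a] by simp_all
  have e0e0: "e0 * e0 = e0" using e0 by (simp add: idems_def)
  have c_comm: "c = f0 * e0" unfolding c_def using idems_S0_comm[OF e0 f0] .
  have e0k: "e0 * k = k" unfolding k_def using e0e0 by (simp add: mult.assoc[symmetric])
  have kf0: "k * f0 = k" unfolding k_def using ff0 by (simp add: mult.assoc)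
  have ck: "c * k = c"
  proof -
    have "c * k = e0 * (f0 * e0) * f" unfolding c_def k_def by (simp add: mult.assoc)
    also have "\<dots> = e0 * (e0 * f0) * f" using idems_S0_comm[OF e0 f0] by simp
    also have "\<dots> = e0 * (f0 * f)" using e0e0 by (simp add: mult.assoc[symmetric])
    finally show ?thesis using f0f c_def by simp
  qed
  have e0e': "e0 * e' = e'" using e'_eq e0k by (simp add: mult.assoc[symmetric])
  have af0: "a * f0 = a"
  proof -
    have "a * f0 = f' * (f0 * a)" using f'a idems_S0_comm[OF a f0] by (metis mult.assoc)
    also have "\<dots> = a * (k * f0) * a" using f'_eq by (simp add: mult.assoc)
    finally show ?thesis using kf0 f'_eq f'a by simp
  qed
  have "fact S0 S c (a, c * e', f')"
  proof -
    have "c * e' \<in> idems S" using idems_S_mult[OF _ e'] c idems_S0_subset by blast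
    moreover have "c = c * e' * a * f'" using ck k_eq by (simp add: mult.assoc)
    moreover have "a * (c * e') = (a * f0) * (e0 * e')" using c_comm by (simp add: mult.assoc)
    then have "a * (c * e') = a" using af0 e0e' ae' by simp
    ultimately show ?thesis using fact_idems_S0_iff[OF a] e'a f' f'a af' by (simp add: mult.assoc)
  qed
  then have "f' = c" using fact_idems_S0[OF c] by simp
  then have "k * c = k" using k_eq f' by (simp add: idems_def mult.assoc)
  with ck show ?thesis unfolding k_def c_def by simp
qed

lemma idems_S0_mult_right_R:
  assumes e0: "e0 \<in> idems S0" and f: "f \<in> idems S" and f0: "f0 \<in> idems S0"
    and f0f: "f0 * f = f" and ff0: "f * f0 = f0"
  shows "f0 * e0 * (f * e0) = f * e0 \<and> f * e0 * (f0 * e0) = f0 * e0"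
proof -
  define k c a where "k = f * e0" and "c = f0 * e0" and "a = bar S0 S k"
  define e' f' where "e' = ex S0 S k" and "f' = fx S0 S k"
  have e0S: "e0 \<in> idems S" using e0 idems_S0_subset by blast
  have k: "k \<in> idems S" unfolding k_def using idems_S_mult[OF f e0S] .
  have c: "c \<in> idems S0" unfolding c_def using idems_S0_mult[OF f0 e0] .
  have a: "a \<in> idems S0" unfolding a_def using bar_idems[OF k] .
  have e'_eq: "e' = k * a" and f'_eq: "f' = a * k" unfolding e'_def f'_def a_def using ex_fx_idems[OF k] by simp_all
  have "fact S0 S k (a, e', f')"
    using fact_bar_ex_fx k unfolding a_def e'_def f'_def by (simp add: idems_def)
  then have e': "e' \<in> idems S" and f': "f' \<in> idems S" and k_eq: "k = e' * a * f'"
    and e'a: "e' * a = e'" and ae': "a * e' = a" and f'a: "f' * a = a" and af': "a * f' = f'"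
    using fact_idems_S0_iff[OF a] by simp_all
  have e0e0: "e0 * e0 = e0" using e0 by (simp add: idems_def)
  have c_comm: "c = e0 * f0" unfolding c_def using idems_S0_comm[OF e0 f0] by simp
  have ke0: "k * e0 = k" unfolding k_def using e0e0 by (simp add: mult.assoc)
  have f0k: "f0 * k = k" unfolding k_def using f0f by (simp add: mult.assoc[symmetric])
  have kc: "k * c = c"
  proof -
    have "k * c = f * (e0 * f0) * e0" unfolding c_def k_def by (simp add: mult.assoc)
    also have "\<dots> = (f * f0) * (e0 * e0)" using idems_S0_comm[OF e0 f0] by (simp add: mult.assoc)
    finally show ?thesis using ff0 e0e0 c_def by simp
  qed
  have f'e0: "f' * e0 = f'" using f'_eq ke0 by (simp add: mult.assoc)
  have f0a: "f0 * a = a"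
  proof -
    have "f0 * a = (a * f0) * e'" using ae' idems_S0_comm[OF a f0] by (metis mult.assoc)
    also have "\<dots> = a * ((f0 * k) * a)" using e'_eq by (simp add: mult.assoc)
    finally show ?thesis using f0k e'_eq ae' by simp
  qed
  have "fact S0 S c (a, e', f' * c)"
  proof -
    have "f' * c \<in> idems S" using idems_S_mult[OF f'] c idems_S0_subset by blast
    moreover have "c = e' * a * (f' * c)" using kc k_eq by (simp add: mult.assoc)
    moreover have "f' * c * a = (f' * e0) * (f0 * a)" using c_comm by (simp add: mult.assoc)
    then have "f' * c * a = a" using f'e0 f0a f'a by simp
    moreover have "a * (f' * c) = f' * c" using af' by (simp add: mult.assoc[symmetric])
    ultimately show ?thesis unfolding fact_idems_S0_iff[OF a] using e' e'a ae' by blast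
  qed
  then have "e' = c" using fact_idems_S0[OF c] by simp
  then have "c * k = k" using k_eq e' by (simp add: idems_def mult.assoc[symmetric])
  with kc show ?thesis unfolding k_def c_def by simp
qed

lemma L_idems_S0_mult:
  assumes e: "e \<in> idems S" and e0: "e0 \<in> idems S0" and ee0: "e * e0 = e" and e0e: "e0 * e = e0"
    and f: "f \<in> idems S" and f0: "f0 \<in> idems S0" and ff0: "f * f0 = f" and f0f: "f0 * f = f0"
  shows "e * f * (e0 * f0) = e * f \<and> e0 * f0 * (e * f) = e0 * f0"
proof
  have "e * f * (e0 * f0) = (e * e0) * f * (e0 * f0)" using ee0 by simp
  also have "\<dots> = e * (e0 * f * (e0 * f0))" by (simp add: mult.assoc)
  also have "\<dots> = (e * e0) * f" using idems_S0_mult_left_L[OF e0 f f0 ff0 f0f] by (simp add: mult.assoc)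
  also have "\<dots> = e * f" using ee0 by simp
  finally show "e * f * (e0 * f0) = e * f" .
next
  have "e0 * f0 * (e * f) = f0 * (e0 * e) * f" using idems_S0_comm[OF e0 f0] by (simp add: mult.assoc)
  also have "\<dots> = (e0 * f0) * f" using e0e idems_S0_comm[OF e0 f0] by simp
  also have "\<dots> = e0 * f0" using f0f by (simp add: mult.assoc)
  finally show "e0 * f0 * (e * f) = e0 * f0" .
qed

lemma R_idems_S0_mult:
  assumes e: "e \<in> idems S" and e0: "e0 \<in> idems S0" and e0e: "e0 * e = e" and ee0: "e * e0 = e0"
    and f: "f \<in> idems S" and f0: "f0 \<in> idems S0" and f0f: "f0 * f = f" and ff0: "f * f0 = f0"
  shows "e0 * f0 * (e * f) = e * f \<and> e * f * (e0 * f0) = e0 * f0"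
proof
  have "e0 * f0 * (e * f) = (e0 * f0 * (e * f0)) * f" using f0f by (simp add: mult.assoc)
  also have "\<dots> = e * f" using idems_S0_mult_right_R[OF f0 e e0 e0e ee0] f0f by (simp add: mult.assoc)
  finally show "e0 * f0 * (e * f) = e * f" .
next
  have "e * f * (e0 * f0) = e * (f * f0) * e0" using idems_S0_comm[OF e0 f0] by (simp add: mult.assoc)
  also have "\<dots> = e * (e0 * f0)" using ff0 idems_S0_comm[OF e0 f0] by (simp add: mult.assoc)
  also have "\<dots> = e0 * f0" using ee0 by (simp add: mult.assoc[symmetric])
  finally show "e * f * (e0 * f0) = e0 * f0" .
qed

lemma Iset_mult_closed: "e \<in> Iset S0 S \<Longrightarrow> f \<in> Iset S0 S \<Longrightarrow> e * f \<in> Iset S0 S"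
  unfolding Iset_iff using L_idems_S0_mult idems_S_mult idems_S0_mult by meson

lemma Lambda_mult_closed: "e \<in> Lambda S0 S \<Longrightarrow> f \<in> Lambda S0 S \<Longrightarrow> e * f \<in> Lambda S0 S"
  unfolding Lambda_iff using R_idems_S0_mult idems_S_mult idems_S0_mult by meson

text \<open>Both e f and e f e are L-related to c = e0 f0, which makes them equal in a band.\<close>

lemma Iset_left_regular:
  assumes "e \<in> Iset S0 S" and "f \<in> Iset S0 S"
  shows "e * f * e = e * f"
proof -
  obtain e0 where e: "e \<in> idems S" and e0: "e0 \<in> idems S0" and ee0: "e * e0 = e" "e0 * e = e0"
    using assms(1) Iset_iff by blast
  obtain f0 where f: "f \<in> idems S" and f0: "f0 \<in> idems S0" and ff0: "f * f0 = f" "f0 * f = f0"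
    using assms(2) Iset_iff by blast
  define c where "c = e0 * f0"
  have c: "c \<in> idems S0" unfolding c_def using idems_S0_mult[OF e0 f0] .
  have ef: "e * f \<in> idems S" using idems_S_mult[OF e f] .
  have ef_c: "e * f * c = e * f" "c * (e * f) = c"
    using L_idems_S0_mult[OF e e0 ee0 f f0 ff0] unfolding c_def by simp_all
  have "c * e0 = c" unfolding c_def using idems_S0_comm[OF e0 f0] e0 by (simp add: idems_def mult.assoc)
  then have c_efe: "c * (e * f * e) = c"
    using L_idems_S0_mult[OF ef c ef_c e e0 ee0] by simp
  have "e * f * e = e * f * (e * f * e)" using ef by (simp add: idems_def mult.assoc[symmetric])
  also have "\<dots> = (e * f * c) * (e * f * e)" using ef_c(1) by simp
  also have "\<dots> = e * f * (c * (e * f * e))" by (simp add: mult.assoc)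
  also have "\<dots> = e * f" using c_efe ef_c(1) by simp
  finally show ?thesis .
qed

lemma Lambda_right_regular:
  assumes "e \<in> Lambda S0 S" and "f \<in> Lambda S0 S"
  shows "e * f * e = f * e"
proof -
  obtain e0 where e: "e \<in> idems S" and e0: "e0 \<in> idems S0" and ee0: "e0 * e = e" "e * e0 = e0"
    using assms(1) Lambda_iff by blast
  obtain f0 where f: "f \<in> idems S" and f0: "f0 \<in> idems S0" and ff0: "f0 * f = f" "f * f0 = f0"
    using assms(2) Lambda_iff by blast
  define c where "c = f0 * e0"
  have c: "c \<in> idems S0" unfolding c_def using idems_S0_mult[OF f0 e0] .
  have fe: "f * e \<in> idems S" using idems_S_mult[OF f e] .
  have fe_c: "c * (f * e) = f * e" "f * e * c = c"
    using R_idems_S0_mult[OF f f0 ff0 e e0 ee0] unfolding c_def by simp_all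
  have "e0 * c = (e0 * f0) * e0" unfolding c_def by (simp add: mult.assoc)
  also have "\<dots> = f0 * (e0 * e0)" using idems_S0_comm[OF e0 f0] by (simp add: mult.assoc)
  finally have "e0 * c = c" unfolding c_def using e0 by (simp add: idems_def)
  then have efe_c: "e * (f * e) * c = c"
    using R_idems_S0_mult[OF e e0 ee0 fe c fe_c] by simp
  have "f * e = e * (f * e) * c * (f * e)" using efe_c fe_c(1) by (simp add: mult.assoc)
  also have "\<dots> = e * (f * e) * (f * e)" using fe_c(1) by (simp add: mult.assoc)
  also have "\<dots> = e * f * e" using fe by (simp add: idems_def mult.assoc)
  finally show ?thesis by simp
qed

lemma Iset_subset_idems: "Iset S0 S \<subseteq> idems S"
  using Iset_iff by blast

lemma Lambda_subset_idems: "Lambda S0 S \<subseteq> idems S"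
  using Lambda_iff by blast

lemma left_regular_band_Iset: "left_regular_band S (Iset S0 S)"
  unfolding left_regular_band_def band_def closed_def
  using Iset_subset_idems Iset_mult_closed Iset_left_regular unfolding idems_def by blast

lemma right_regular_band_Lambda: "right_regular_band S (Lambda S0 S)"
  unfolding right_regular_band_def band_def closed_def
  using Lambda_subset_idems Lambda_mult_closed Lambda_right_regular unfolding idems_def by blast

lemma inverses_inter_idems_S0_L:
  assumes "x \<in> idems S" and "e0 \<in> idems S0" and "x * e0 = x" and "e0 * x = e0"
  shows "inverses S x \<inter> idems S0 = {e0}"
proof (rule inverses_inter_commuting_idems_left)
  show "e0 \<in> S" using assms(2) idems_S0_subset by (auto simp: idems_def)
qed (use assms idems_S0_comm in \<open>simp_all add: idems_def\<close>)

lemma inverses_inter_idems_S0_R: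
  assumes "x \<in> idems S" and "e0 \<in> idems S0" and "e0 * x = x" and "x * e0 = e0"
  shows "inverses S x \<inter> idems S0 = {e0}"
proof (rule inverses_inter_commuting_idems_right)
  show "e0 \<in> S" using assms(2) idems_S0_subset by (auto simp: idems_def)
qed (use assms idems_S0_comm in \<open>simp_all add: idems_def\<close>)

lemma idems_S0_subset_Iset: "idems S0 \<subseteq> Iset S0 S"
proof
  fix e assume e: "e \<in> idems S0"
  then have "e \<in> idems S" and "e * e = e" using idems_S0_subset by (auto simp: idems_def)
  with e show "e \<in> Iset S0 S" unfolding Iset_iff by blast
qed

lemma idems_S0_subset_Lambda: "idems S0 \<subseteq> Lambda S0 S"
proof
  fix e assume e: "e \<in> idems S0"
  then have "e \<in> idems S" and "e * e = e" using idems_S0_subset by (auto simp: idems_def)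
  with e show "e \<in> Lambda S0 S" unfolding Lambda_iff by blast
qed

lemma semilattice_transversal_Iset: "semilattice_transversal S (idems S0) (Iset S0 S)"
  unfolding semilattice_transversal_def closed_def
proof (intro conjI ballI)
  fix x assume "x \<in> Iset S0 S"
  then obtain e0 where "x \<in> idems S" "e0 \<in> idems S0" "x * e0 = x" "e0 * x = e0"
    unfolding Iset_iff by blast
  then show "card (inverses S x \<inter> idems S0) = 1" using inverses_inter_idems_S0_L by simp
qed (use idems_S0_subset_Iset idems_S0_mult idems_S0_comm in \<open>auto simp: idems_def\<close>)

lemma semilattice_transversal_Lambda: "semilattice_transversal S (idems S0) (Lambda S0 S)"
  unfolding semilattice_transversal_def closed_def
proof (intro conjI ballI)
  fix x assume "x \<in> Lambda S0 S"
  then obtain e0 where "x \<in> idems S" "e0 \<in> idems S0" "e0 * x = x" "x * e0 = e0"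
    unfolding Lambda_iff by blast
  then show "card (inverses S x \<inter> idems S0) = 1" using inverses_inter_idems_S0_R by simp
qed (use idems_S0_subset_Lambda idems_S0_mult idems_S0_comm in \<open>auto simp: idems_def\<close>)

lemma zero_inv_L_idems_S0:
  assumes "x \<in> idems S" and "e0 \<in> idems S0" and "x * e0 = x" and "e0 * x = e0"
  shows "zero_inv S0 S x = e0"
  by (rule zero_inv_eqI)
    (use inverses_inter_idems_S0_L[OF assms] ex_fx_L_idems_S0[OF assms] assms(3,4) in auto)

lemma zero_inv_R_idems_S0:
  assumes "x \<in> idems S" and "e0 \<in> idems S0" and "e0 * x = x" and "x * e0 = e0"
  shows "zero_inv S0 S x = e0"
  by (rule zero_inv_eqI)
    (use inverses_inter_idems_S0_R[OF assms] ex_fx_R_idems_S0[OF assms] assms(3,4) in auto)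

lemma zero_inv_Iset:
  assumes "x \<in> Iset S0 S"
  shows "zero_inv S0 S x \<in> inverses S x \<inter> idems S0"
proof -
  obtain e0 where "x \<in> idems S" "e0 \<in> idems S0" "x * e0 = x" "e0 * x = e0"
    using assms unfolding Iset_iff by blast
  then show ?thesis using zero_inv_L_idems_S0 inverses_inter_idems_S0_L by simp
qed

lemma zero_inv_Lambda:
  assumes "x \<in> Lambda S0 S"
  shows "zero_inv S0 S x \<in> inverses S x \<inter> idems S0"
proof -
  obtain e0 where "x \<in> idems S" "e0 \<in> idems S0" "e0 * x = x" "x * e0 = e0"
    using assms unfolding Lambda_iff by blast
  then show ?thesis using zero_inv_R_idems_S0 inverses_inter_idems_S0_R by simp
qed

lemma zero_inv_idems_S0: "e \<in> idems S0 \<Longrightarrow> zero_inv S0 S e = e"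
  using zero_inv_L_idems_S0[of e e] idems_S0_subset by (auto simp: idems_def)

end

theorem lemma2p3:
  fixes S S0 :: "'a::semigroup_mult set"
  assumes "closed S" and "quasi_adequate S" and "adequate_transversal S0 S"
  shows "left_regular_band S (Iset S0 S) \<and> right_regular_band S (Lambda S0 S) \<and>
         semilattice_transversal S (idems S0) (Iset S0 S) \<and>
         semilattice_transversal S (idems S0) (Lambda S0 S) \<and>
         (\<forall>x\<in>Iset S0 S \<union> Lambda S0 S. zero_inv S0 S x \<in> inverses S x \<inter> idems S0) \<and>
         (\<forall>x\<in>idems S0. zero_inv S0 S x = x)"
proof -
  interpret quasi_adequate_transversal S S0 using assms by unfold_locales
  show ?thesis
    using left_regular_band_Iset right_regular_band_Lambda
      semilattice_transversal_Iset semilattice_transversal_Lambda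
      zero_inv_Iset zero_inv_Lambda zero_inv_idems_S0
    by blast
qed

end
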